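(* Let $\rho$ be an $n$-qubit state and $\mathcal S$ a collection of subsets of $[n]$ such that the hypergraph $([n],\mathcal S)$ is connected and $\rho_S$ is a symmetric state on $\mathcal H_S$ for every $S\in\mathcal S$. Then $\rho$ is a symmetric state.
   Context: Let $[n]=\{1,\dots,n\}$, $\mathcal H_{[n]}=(\mathbb C^2)^{\otimes n}$, $\mathcal H_S$ the tensor product of the qubits in $S$, and $\rho_S$ the partial trace of $\rho$ over qubits outside $S$. The symmetric subspace of $\mathcal H_S$ consists of vectors invariant under swapping any two qubits of $S$; a state on $\mathcal H_S$ is symmetric if its range is contained in the symmetric subspace (every single-qubit state is symmetric). The hypergraph $([n],\mathcal S)$ is connected if for every partition of $[n]$ into nonempty sets $X,Y$ some $S\in\mathcal S$ intersects both $X$ and $Y$. *)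

theory Defs
  imports Complex_Main
begin

text \<open>Computational basis of H_S: classical bit assignments to the qubits in S
  (extensionally False outside S). Operators on H_S are matrices indexed by such
  assignments; vectors are functions on assignments (only values on configs S matter).\<close>

type_synonym config = "nat \<Rightarrow> bool"
type_synonym qop = "config \<Rightarrow> config \<Rightarrow> complex"
type_synonym qvec = "config \<Rightarrow> complex"

definition configs :: "nat set \<Rightarrow> config set" where
  "configs S = {x. \<forall>i. i \<notin> S \<longrightarrow> \<not> x i}"

definition merge :: "nat set \<Rightarrow> config \<Rightarrow> config \<Rightarrow> config" where
  "merge S x z = (\<lambda>i. if i \<in> S then x i else z i)"

definition apply_op :: "nat set \<Rightarrow> qop \<Rightarrow> qvec \<Rightarrow> qvec" where
  "apply_op S A v = (\<lambda>x. \<Sum>y\<in>configs S. A x y * v y)"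

definition inner_S :: "nat set \<Rightarrow> qvec \<Rightarrow> qvec \<Rightarrow> complex" where
  "inner_S S u v = (\<Sum>x\<in>configs S. cnj (u x) * v x)"

definition is_state :: "nat set \<Rightarrow> qop \<Rightarrow> bool" where
  "is_state S \<rho> \<longleftrightarrow>
     (\<forall>v. Im (inner_S S v (apply_op S \<rho> v)) = 0 \<and> Re (inner_S S v (apply_op S \<rho> v)) \<ge> 0)
     \<and> (\<Sum>x\<in>configs S. \<rho> x x) = 1"

definition swapq :: "nat \<Rightarrow> nat \<Rightarrow> config \<Rightarrow> config" where
  "swapq i j x = (\<lambda>k. if k = i then x j else if k = j then x i else x k)"

definition sym_subspace :: "nat set \<Rightarrow> qvec set" where
  "sym_subspace S = {\<psi>. \<forall>i\<in>S. \<forall>j\<in>S. \<forall>x\<in>configs S. \<psi> (swapq i j x) = \<psi> x}"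

definition op_range :: "nat set \<Rightarrow> qop \<Rightarrow> qvec set" where
  "op_range S A = {apply_op S A v | v. True}"

definition symmetric_state :: "nat set \<Rightarrow> qop \<Rightarrow> bool" where
  "symmetric_state S \<rho> \<longleftrightarrow> is_state S \<rho> \<and> op_range S \<rho> \<subseteq> sym_subspace S"

definition partial_trace :: "nat \<Rightarrow> nat set \<Rightarrow> qop \<Rightarrow> qop" where
  "partial_trace n S \<rho> =
     (\<lambda>x y. \<Sum>z\<in>configs ({1..n} - S). \<rho> (merge S x z) (merge S y z))"

definition hypergraph_connected :: "nat set \<Rightarrow> nat set set \<Rightarrow> bool" where
  "hypergraph_connected V \<S> \<longleftrightarrow>
     (\<forall>X Y. X \<noteq> {} \<and> Y \<noteq> {} \<and> X \<union> Y = V \<and> X \<inter> Y = {} \<longrightarrow>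
        (\<exists>S\<in>\<S>. S \<inter> X \<noteq> {} \<and> S \<inter> Y \<noteq> {}))"

end

theory Submission
  imports Defs
begin

text \<open>A matrix has its range in the symmetric subspace iff each of its columns is symmetric, so
  it suffices to show that \<open>\<rho> (swapq i j x) y = \<rho> x y\<close> for all qubits \<open>i, j\<close>. Swap-invariance
  of rows is an equivalence relation on qubits, so by connectivity it is enough to prove it for
  \<open>i, j\<close> in a common \<open>S \<in> \<S>\<close>. There the symmetry of \<open>\<rho>\<^sub>S\<close> gives
  \<open>\<Sum>\<^sub>w \<rho> (\<sigma> w) w = tr \<rho>\<close> for the swap \<open>\<sigma>\<close>, i.e. \<open>\<Sum>\<^sub>w \<langle>e\<^sub>w - e\<^sub>\<sigma>\<^sub>w, \<rho> (e\<^sub>w - e\<^sub>\<sigma>\<^sub>w)\<rangle> = 0\<close>.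
  By positivity every summand vanishes, hence \<open>e\<^sub>w - e\<^sub>\<sigma>\<^sub>w\<close> is orthogonal to the range of
  \<open>\<rho>\<close>, which is the row invariance.\<close>

lemma finite_configs: "finite S \<Longrightarrow> finite (configs S)"
proof -
  assume "finite S"
  have "configs S \<subseteq> (\<lambda>A i. i \<in> A) ` Pow S"
  proof
    fix x assume x: "x \<in> configs S"
    have "x = (\<lambda>i. i \<in> {i. x i})" by auto
    moreover have "{i. x i} \<subseteq> S" using x by (auto simp: configs_def)
    ultimately show "x \<in> (\<lambda>A i. i \<in> A) ` Pow S" by blast
  qed
  with \<open>finite S\<close> show ?thesis by (meson finite_Pow_iff finite_imageI finite_subset)
qed

lemma swapq_in_configs: "i \<in> S \<Longrightarrow> j \<in> S \<Longrightarrow> x \<in> configs S \<Longrightarrow> swapq i j x \<in> configs S"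
  by (auto simp: configs_def swapq_def)

lemma swapq_swapq [simp]: "swapq i j (swapq i j x) = x"
  by (auto simp: swapq_def)

lemma swapq_same [simp]: "swapq i i x = x"
  by (auto simp: swapq_def)

lemma swapq_commute: "swapq i j = swapq j i"
  by (auto simp: swapq_def fun_eq_iff)

lemma swapq_conj: "j \<noteq> i \<Longrightarrow> j \<noteq> k \<Longrightarrow> i \<noteq> k \<Longrightarrow>
    swapq i k x = swapq i j (swapq j k (swapq i j x))"
  by (auto simp: swapq_def)

lemma merge_swapq: "i \<in> S \<Longrightarrow> j \<in> S \<Longrightarrow> merge S (swapq i j x) z = swapq i j (merge S x z)"
  by (auto simp: swapq_def merge_def)

lemma bij_betw_merge:
  assumes "S \<subseteq> V"
  shows "bij_betw (\<lambda>(x, z). merge S x z) (configs S \<times> configs (V - S)) (configs V)"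
proof (rule bij_betw_imageI)
  show "inj_on (\<lambda>(x, z). merge S x z) (configs S \<times> configs (V - S))"
  proof (rule inj_onI, clarify)
    fix x z x' z'
    assume "x \<in> configs S" "z \<in> configs (V - S)" "x' \<in> configs S" "z' \<in> configs (V - S)"
      and "merge S x z = merge S x' z'"
    then have "x i = x' i \<and> z i = z' i" for i
      by (cases "i \<in> S") (auto simp: merge_def configs_def fun_eq_iff dest: spec[of _ i])
    then show "x = x' \<and> z = z'" by auto
  qed
  have "w \<in> (\<lambda>(x, z). merge S x z) ` (configs S \<times> configs (V - S))" if "w \<in> configs V" for w
  proof -
    have "w = merge S (\<lambda>i. i \<in> S \<and> w i) (\<lambda>i. i \<notin> S \<and> w i)"
      by (auto simp: merge_def)
    moreover have "(\<lambda>i. i \<in> S \<and> w i) \<in> configs S" "(\<lambda>i. i \<notin> S \<and> w i) \<in> configs (V - S)"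
      using that by (auto simp: configs_def)
    ultimately show ?thesis by force
  qed
  moreover have "(\<lambda>(x, z). merge S x z) ` (configs S \<times> configs (V - S)) \<subseteq> configs V"
    using assms by (auto simp: configs_def merge_def)
  ultimately show "(\<lambda>(x, z). merge S x z) ` (configs S \<times> configs (V - S)) = configs V"
    by blast
qed

lemma sum_configs_merge:
  assumes "S \<subseteq> V" "finite V"
  shows "(\<Sum>w\<in>configs V. f w) = (\<Sum>x\<in>configs S. \<Sum>z\<in>configs (V - S). f (merge S x z))"
proof -
  have "(\<Sum>x\<in>configs S. \<Sum>z\<in>configs (V - S). f (merge S x z))
      = (\<Sum>p\<in>configs S \<times> configs (V - S). f ((\<lambda>(x, z). merge S x z) p))"
    by (subst sum.cartesian_product) (simp add: case_prod_beta)
  also have "\<dots> = (\<Sum>w\<in>configs V. f w)"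
    by (rule sum.reindex_bij_betw[OF bij_betw_merge[OF assms(1)]])
  finally show ?thesis by simp
qed

definition positive_op :: "nat set \<Rightarrow> qop \<Rightarrow> bool" where
  "positive_op S A \<longleftrightarrow>
     (\<forall>v. Im (inner_S S v (apply_op S A v)) = 0 \<and> Re (inner_S S v (apply_op S A v)) \<ge> 0)"

lemma is_state_imp_positive_op: "is_state S \<rho> \<Longrightarrow> positive_op S \<rho>"
  by (simp add: is_state_def positive_op_def)

definition basis_vec :: "config \<Rightarrow> qvec" where
  "basis_vec y = (\<lambda>x. if x = y then 1 else 0)"

lemma apply_op_basis_vec:
  assumes "finite S" "y \<in> configs S"
  shows "apply_op S A (basis_vec y) = (\<lambda>x. A x y)"
proof -
  have "A x z * basis_vec y z = (if z = y then A x y else 0)" for x z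
    by (simp add: basis_vec_def)
  then show ?thesis using assms by (simp add: apply_op_def finite_configs)
qed

lemma inner_S_basis_vec:
  assumes "finite S" "y \<in> configs S"
  shows "inner_S S (basis_vec y) v = v y"
proof -
  have "cnj (basis_vec y x) * v x = (if x = y then v y else 0)" for x
    by (simp add: basis_vec_def)
  then show ?thesis using assms by (simp add: inner_S_def finite_configs)
qed

lemma inner_S_diff_left: "inner_S S (\<lambda>x. u x - u' x) v = inner_S S u v - inner_S S u' v"
  by (simp add: inner_S_def algebra_simps sum_subtractf)

lemma apply_op_diff: "apply_op S A (\<lambda>x. v x - v' x) = (\<lambda>x. apply_op S A v x - apply_op S A v' x)"
  by (simp add: apply_op_def algebra_simps sum_subtractf)

lemma inner_S_basis_vec_diff:
  assumes "finite S" "y \<in> configs S" "y' \<in> configs S"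
  shows "inner_S S (\<lambda>x. basis_vec y x - basis_vec y' x) v = v y - v y'"
  unfolding inner_S_diff_left using assms by (simp add: inner_S_basis_vec)

lemma apply_op_basis_vec_diff:
  assumes "finite S" "y \<in> configs S" "y' \<in> configs S"
  shows "apply_op S A (\<lambda>x. basis_vec y x - basis_vec y' x) = (\<lambda>x. A x y - A x y')"
  unfolding apply_op_diff using assms by (simp add: apply_op_basis_vec)

lemma quadratic_form_add_scaled:
  "inner_S S (\<lambda>y. u y + t * w y) (apply_op S A (\<lambda>y. u y + t * w y)) =
    inner_S S u (apply_op S A u) + cnj t * inner_S S w (apply_op S A u)
    + t * inner_S S u (apply_op S A w) + cnj t * t * inner_S S w (apply_op S A w)"
proof -
  have "apply_op S A (\<lambda>y. u y + t * w y) = (\<lambda>x. apply_op S A u x + t * apply_op S A w x)"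
    by (simp add: apply_op_def algebra_simps sum.distrib sum_distrib_left)
  then show ?thesis
    by (simp add: inner_S_def algebra_simps sum.distrib sum_distrib_left)
qed

lemma nonneg_quadratic_imp_linear_coeff_zero:
  fixes c d :: real
  assumes "\<forall>r. r * c + r\<^sup>2 * d \<ge> 0"
  shows "c = 0"
proof (rule ccontr)
  assume "c \<noteq> 0"
  define r where "r = - c / (\<bar>d\<bar> + 1)"
  have pos: "\<bar>d\<bar> + 1 > 0" by simp
  have rd: "r * (\<bar>d\<bar> + 1) = - c" unfolding r_def using pos by simp
  have "r\<^sup>2 * (\<bar>d\<bar> + 1) = r * (r * (\<bar>d\<bar> + 1))" by (simp add: power2_eq_square)
  also have "\<dots> = - (r * c)" using rd by simp
  finally have "r * c + r\<^sup>2 * d = r\<^sup>2 * (d - (\<bar>d\<bar> + 1))" by (simp add: algebra_simps)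
  also have "\<dots> < 0"
    using \<open>c \<noteq> 0\<close> pos rd by (intro mult_pos_neg) auto
  finally show False using assms by (metis not_less)
qed

lemma nonneg_hermitian_quadratic_imp_cross_terms_zero:
  fixes a b d :: complex
  assumes nonneg: "\<And>t. Im (cnj t * a + t * b + cnj t * t * d) = 0 \<and>
                        Re (cnj t * a + t * b + cnj t * t * d) \<ge> 0"
  shows "a = 0 \<and> b = 0"
proof -
  have "r * (Re a + Re b) + r\<^sup>2 * Re d \<ge> 0" for r :: real
    using nonneg[of "complex_of_real r"] by (simp add: algebra_simps power2_eq_square)
  then have re: "Re a + Re b = 0" by (blast intro: nonneg_quadratic_imp_linear_coeff_zero)
  have "r * (Im a - Im b) + r\<^sup>2 * Re d \<ge> 0" for r :: real
    using nonneg[of "\<i> * complex_of_real r"] by (simp add: algebra_simps power2_eq_square)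
  then have im: "Im a - Im b = 0" by (blast intro: nonneg_quadratic_imp_linear_coeff_zero)
  have "Im a + Im b + Im d = 0" "- (Im a + Im b) + Im d = 0"
       "- Re a + Re b + Im d = 0" "Re a - Re b + Im d = 0"
    using nonneg[of 1] nonneg[of "-1"] nonneg[of "\<i>"] nonneg[of "-\<i>"] by simp_all
  with re im show ?thesis by (simp add: complex_eq_iff)
qed

lemma positive_op_quadratic_zero_imp_orthogonal:
  assumes pos: "positive_op S A" and zero: "inner_S S u (apply_op S A u) = 0"
  shows "inner_S S u (apply_op S A w) = 0"
proof -
  have "Im (cnj t * inner_S S w (apply_op S A u) + t * inner_S S u (apply_op S A w)
              + cnj t * t * inner_S S w (apply_op S A w)) = 0 \<and>
           Re (cnj t * inner_S S w (apply_op S A u) + t * inner_S S u (apply_op S A w)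
              + cnj t * t * inner_S S w (apply_op S A w)) \<ge> 0" for t
    using pos[unfolded positive_op_def, rule_format, of "\<lambda>y. u y + t * w y"]
    by (simp only: quadratic_form_add_scaled zero add_0)
  then show ?thesis
    using nonneg_hermitian_quadratic_imp_cross_terms_zero by blast
qed

lemma positive_op_involution_trace_eq_imp_row_invariant:
  assumes pos: "positive_op V A" and "finite V"
    and maps: "\<And>w. w \<in> configs V \<Longrightarrow> \<sigma> w \<in> configs V"
    and invol: "\<And>w. w \<in> configs V \<Longrightarrow> \<sigma> (\<sigma> w) = w"
    and trace: "(\<Sum>w\<in>configs V. A (\<sigma> w) w) = (\<Sum>w\<in>configs V. A w w)"
    and w: "w \<in> configs V" and x: "x \<in> configs V"
  shows "A (\<sigma> w) x = A w x"
proof -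
  define C where "C = configs V"
  have finC: "finite C" unfolding C_def using \<open>finite V\<close> by (rule finite_configs)
  define u where "u w = (\<lambda>y. basis_vec w y - basis_vec (\<sigma> w) y)" for w
  define q where "q w = inner_S V (u w) (apply_op V A (u w))" for w
  have q_eq: "q w = A w w - A w (\<sigma> w) - A (\<sigma> w) w + A (\<sigma> w) (\<sigma> w)" if "w \<in> C" for w
  proof -
    have "w \<in> configs V" "\<sigma> w \<in> configs V" using that maps unfolding C_def by auto
    then show ?thesis
      unfolding q_def u_def
      by (simp only: apply_op_basis_vec_diff inner_S_basis_vec_diff \<open>finite V\<close>) simp
  qed
  have bij: "bij_betw \<sigma> C C"
    unfolding C_def by (rule bij_betw_byWitness[of _ \<sigma>]) (use maps invol in auto)
  have reindex: "(\<Sum>w\<in>C. f (\<sigma> w)) = (\<Sum>w\<in>C. f w)" for f :: "config \<Rightarrow> complex"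
    using sum.reindex_bij_betw[OF bij] .
  have "(\<Sum>w\<in>C. q w) =
      (\<Sum>w\<in>C. A w w) - (\<Sum>w\<in>C. A w (\<sigma> w)) - (\<Sum>w\<in>C. A (\<sigma> w) w) + (\<Sum>w\<in>C. A (\<sigma> w) (\<sigma> w))"
    using q_eq by (simp add: sum_subtractf sum.distrib)
  also have "(\<Sum>w\<in>C. A w (\<sigma> w)) = (\<Sum>w\<in>C. A (\<sigma> w) w)"
  proof -
    have "(\<Sum>w\<in>C. A w (\<sigma> w)) = (\<Sum>w\<in>C. A (\<sigma> (\<sigma> w)) (\<sigma> w))"
      using invol unfolding C_def by (intro sum.cong) auto
    also have "\<dots> = (\<Sum>w\<in>C. A (\<sigma> w) w)" by (rule reindex)
    finally show ?thesis .
  qed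
  also have "(\<Sum>w\<in>C. A (\<sigma> w) (\<sigma> w)) = (\<Sum>w\<in>C. A w w)" by (rule reindex)
  finally have "(\<Sum>w\<in>C. q w) = 0" using trace unfolding C_def by simp
  then have "(\<Sum>w\<in>C. Re (q w)) = 0"
    by (metis Re_sum zero_complex.sel(1))
  moreover have nonneg: "Im (q w) = 0 \<and> Re (q w) \<ge> 0" for w
    using pos[unfolded positive_op_def, rule_format, of "u w"] unfolding q_def .
  ultimately have "Re (q w) = 0"
    using sum_nonneg_eq_0_iff[OF finC, of "\<lambda>w. Re (q w)"] w unfolding C_def by simp
  with nonneg have "q w = 0" by (simp add: complex_eq_iff)
  then have "inner_S V (u w) (apply_op V A (basis_vec x)) = 0"
    unfolding q_def by (rule positive_op_quadratic_zero_imp_orthogonal[OF pos])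
  also have "inner_S V (u w) (apply_op V A (basis_vec x)) = A w x - A (\<sigma> w) x"
    unfolding u_def using w x maps[OF w] \<open>finite V\<close>
    by (simp only: apply_op_basis_vec inner_S_basis_vec_diff)
  finally show ?thesis by simp
qed


definition swap_invariant :: "nat set \<Rightarrow> nat \<Rightarrow> nat \<Rightarrow> qvec \<Rightarrow> bool" where
  "swap_invariant S i j \<psi> \<longleftrightarrow> (\<forall>x\<in>configs S. \<psi> (swapq i j x) = \<psi> x)"

lemma sym_subspace_iff_swap_invariant:
  "\<psi> \<in> sym_subspace S \<longleftrightarrow> (\<forall>i\<in>S. \<forall>j\<in>S. swap_invariant S i j \<psi>)"
  by (simp add: sym_subspace_def swap_invariant_def)

lemma swap_invariant_commute: "swap_invariant S i j \<psi> \<Longrightarrow> swap_invariant S j i \<psi>"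
  by (simp add: swap_invariant_def swapq_commute)

lemma swap_invariant_trans:
  assumes ab: "swap_invariant S a b \<psi>" and bc: "swap_invariant S b c \<psi>"
    and "a \<in> S" "b \<in> S" "c \<in> S"
  shows "swap_invariant S a c \<psi>"
  unfolding swap_invariant_def
proof
  fix x assume x: "x \<in> configs S"
  consider "a = c" | "b = a" | "b = c" | "b \<noteq> a" "b \<noteq> c" "a \<noteq> c" by blast
  then show "\<psi> (swapq a c x) = \<psi> x"
  proof cases
    case 4
    have "swapq a b x \<in> configs S" "swapq b c (swapq a b x) \<in> configs S"
      using x assms(3-5) by (simp_all add: swapq_in_configs)
    with x ab bc show ?thesis
      unfolding swap_invariant_def swapq_conj[OF 4, of x] by simp
  qed (use x ab bc in \<open>auto simp: swap_invariant_def\<close>)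
qed

lemma op_range_subset_sym_subspace_iff:
  assumes "finite S"
  shows "op_range S A \<subseteq> sym_subspace S \<longleftrightarrow> (\<forall>y\<in>configs S. (\<lambda>x. A x y) \<in> sym_subspace S)"
proof
  assume "op_range S A \<subseteq> sym_subspace S"
  then have "apply_op S A (basis_vec y) \<in> sym_subspace S" for y
    unfolding op_range_def by blast
  then show "\<forall>y\<in>configs S. (\<lambda>x. A x y) \<in> sym_subspace S"
    using apply_op_basis_vec[OF assms] by metis
next
  assume "\<forall>y\<in>configs S. (\<lambda>x. A x y) \<in> sym_subspace S"
  then have "apply_op S A v (swapq i j x) = apply_op S A v x"
    if "i \<in> S" "j \<in> S" "x \<in> configs S" for i j x v
    using that unfolding apply_op_def sym_subspace_def by (intro sum.cong) auto
  then show "op_range S A \<subseteq> sym_subspace S"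
    unfolding op_range_def sym_subspace_def by blast
qed

lemma sum_swapq_diag_partial_trace:
  assumes "S \<subseteq> {1..n}" "i \<in> S" "j \<in> S"
  shows "(\<Sum>w\<in>configs {1..n}. \<rho> (swapq i j w) w) =
         (\<Sum>x\<in>configs S. partial_trace n S \<rho> (swapq i j x) x)"
  using sum_configs_merge[OF assms(1)] merge_swapq[OF assms(2,3)]
  by (simp add: partial_trace_def)

lemma reduced_symmetric_imp_swap_invariant:
  assumes state: "is_state {1..n} \<rho>" and "S \<subseteq> {1..n}"
    and sym: "symmetric_state S (partial_trace n S \<rho>)"
    and "i \<in> S" "j \<in> S" "y \<in> configs {1..n}"
  shows "swap_invariant {1..n} i j (\<lambda>x. \<rho> x y)"
proof -
  define P where "P = partial_trace n S \<rho>"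
  have "finite S" using \<open>S \<subseteq> {1..n}\<close> finite_subset by blast
  have P_swap_diag: "P (swapq i j x) x = P x x" if "x \<in> configs S" for x
    using sym \<open>finite S\<close> that \<open>i \<in> S\<close> \<open>j \<in> S\<close>
    unfolding symmetric_state_def P_def op_range_subset_sym_subspace_iff[OF \<open>finite S\<close>]
    by (simp add: sym_subspace_def)
  have "(\<Sum>w\<in>configs {1..n}. \<rho> (swapq i j w) w) = (\<Sum>x\<in>configs S. P (swapq i j x) x)"
    unfolding P_def using assms(2,4,5) by (rule sum_swapq_diag_partial_trace)
  also have "\<dots> = (\<Sum>x\<in>configs S. P (swapq i i x) x)"
    \<comment> \<open>\<open>swapq i i\<close> is the identity: the trace is the case \<open>i = j\<close> of the same identity\<close>
    using P_swap_diag by simp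
  also have "\<dots> = (\<Sum>w\<in>configs {1..n}. \<rho> (swapq i i w) w)"
    unfolding P_def using assms(2,4,4) by (rule sum_swapq_diag_partial_trace[symmetric])
  finally have trace: "(\<Sum>w\<in>configs {1..n}. \<rho> (swapq i j w) w) = (\<Sum>w\<in>configs {1..n}. \<rho> w w)"
    by simp
  have "i \<in> {1..n}" "j \<in> {1..n}" using assms(2,4,5) by auto
  then show ?thesis
    unfolding swap_invariant_def
    using positive_op_involution_trace_eq_imp_row_invariant[OF is_state_imp_positive_op[OF state]
        _ swapq_in_configs _ trace _ \<open>y \<in> configs {1..n}\<close>]
    by simp
qed

lemma hypergraph_connected_equivalence_total:
  assumes conn: "hypergraph_connected V \<S>"
    and refl: "\<And>a. a \<in> V \<Longrightarrow> R a a"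
    and sym: "\<And>a b. a \<in> V \<Longrightarrow> b \<in> V \<Longrightarrow> R a b \<Longrightarrow> R b a"
    and trans: "\<And>a b c. a \<in> V \<Longrightarrow> b \<in> V \<Longrightarrow> c \<in> V \<Longrightarrow> R a b \<Longrightarrow> R b c \<Longrightarrow> R a c"
    and edge: "\<And>S a b. S \<in> \<S> \<Longrightarrow> a \<in> S \<Longrightarrow> b \<in> S \<Longrightarrow> R a b"
    and "a \<in> V" "b \<in> V"
  shows "R a b"
proof -
  define X where "X = {c \<in> V. R a c}"
  have "V - X = {}"
  proof (rule ccontr)
    assume "V - X \<noteq> {}"
    moreover have "X \<noteq> {}" unfolding X_def using \<open>a \<in> V\<close> refl by blast
    moreover have "X \<union> (V - X) = V" "X \<inter> (V - X) = {}" unfolding X_def by auto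
    ultimately obtain S where "S \<in> \<S>" "S \<inter> X \<noteq> {}" "S \<inter> (V - X) \<noteq> {}"
      using conn[unfolded hypergraph_connected_def, rule_format, of X "V - X"] by blast
    then obtain c d where "c \<in> S" "c \<in> X" "d \<in> S" "d \<in> V - X" by blast
    then have "c \<in> V" "d \<in> V" "R a c" "R c d" "\<not> R a d"
      using edge[OF \<open>S \<in> \<S>\<close>] unfolding X_def by auto
    with trans \<open>a \<in> V\<close> show False by blast
  qed
  then show ?thesis using \<open>b \<in> V\<close> unfolding X_def by blast
qed

theorem mainTheorem12:
  fixes n :: nat and \<rho> :: qop and \<S> :: "nat set set"
  assumes "is_state {1..n} \<rho>"
    and "\<forall>S\<in>\<S>. S \<subseteq> {1..n}"
    and "hypergraph_connected {1..n} \<S>"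
    and "\<forall>S\<in>\<S>. symmetric_state S (partial_trace n S \<rho>)"
  shows "symmetric_state {1..n} \<rho>"
proof -
  define R where "R a b \<longleftrightarrow> (\<forall>y\<in>configs {1..n}. swap_invariant {1..n} a b (\<lambda>x. \<rho> x y))"
    for a b
  have "R a b" if "a \<in> {1..n}" "b \<in> {1..n}" for a b
    using assms(3) _ _ _ _ that
  proof (rule hypergraph_connected_equivalence_total)
    show "R a a" for a by (simp add: R_def swap_invariant_def)
    show "R a b \<Longrightarrow> R b a" for a b by (simp add: R_def swap_invariant_commute)
    show "R a c" if "a \<in> {1..n}" "b \<in> {1..n}" "c \<in> {1..n}" "R a b" "R b c" for a b c
      using that by (auto simp: R_def intro: swap_invariant_trans)
    show "R a b" if "S \<in> \<S>" "a \<in> S" "b \<in> S" for S a b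
      unfolding R_def using assms(2,4) \<open>S \<in> \<S>\<close>
      by (blast intro: reduced_symmetric_imp_swap_invariant[OF assms(1) _ _ that(2,3)])
  qed
  then show ?thesis
    using assms(1) unfolding symmetric_state_def op_range_subset_sym_subspace_iff[OF finite_atLeastAtMost]
    by (simp add: sym_subspace_iff_swap_invariant R_def)
qed

end
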